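(* Let $M$ be a quasi-permutation matrix. The permutations that are minimal (for the pattern order) among permutations containing $M$ as a submatrix are exactly the permutations whose matrices can be obtained from $M$ by inserting rows, each containing exactly one entry $1$, this entry lying in a column of $M$ consisting only of $0$'s, and inserting columns, each containing exactly one entry $1$, this entry lying in a row of $M$ consisting only of $0$'s.
   Context: A quasi-permutation matrix is a binary matrix with at most one entry $1$ in each row and in each column. A permutation $\sigma$ of $\{1,\dots,n\}$ is identified with its permutation matrix $M_\sigma$ ($M_\sigma(i,j)=1$ iff $i=\sigma(j)$, rows numbered bottom to top). A matrix $M$ is a submatrix of $N$ if $M$ is obtained from $N$ by deleting some rows and/or columns; the pattern order on permutations is the submatrix order restricted to permutation matrices. *)

theory Defs
  imports "HOL-Combinatorics.Permutations"
begin

text \<open>A binary matrix with r rows and c columns is given by its dimensions and a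
  function A :: nat => nat => bool; only entries A i j with i < r, j < c matter.
  Row/column indices start at 0.\<close>

definition quasi_perm :: "nat \<Rightarrow> nat \<Rightarrow> (nat \<Rightarrow> nat \<Rightarrow> bool) \<Rightarrow> bool" where
  "quasi_perm r c A \<longleftrightarrow>
     (\<forall>i<r. \<forall>j<c. \<forall>j'<c. A i j \<and> A i j' \<longrightarrow> j = j') \<and>
     (\<forall>j<c. \<forall>i<r. \<forall>i'<r. A i j \<and> A i' j \<longrightarrow> i = i')"

definition perm_mat :: "(nat \<Rightarrow> nat) \<Rightarrow> nat \<Rightarrow> nat \<Rightarrow> bool" where
  "perm_mat \<sigma> i j \<longleftrightarrow> i = \<sigma> j"

definition submatrix ::
  "nat \<Rightarrow> nat \<Rightarrow> (nat \<Rightarrow> nat \<Rightarrow> bool) \<Rightarrow> nat \<Rightarrow> nat \<Rightarrow> (nat \<Rightarrow> nat \<Rightarrow> bool) \<Rightarrow> bool" where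
  "submatrix r c A R C B \<longleftrightarrow>
     (\<exists>f g. strict_mono_on {..<r} f \<and> f ` {..<r} \<subseteq> {..<R} \<and>
            strict_mono_on {..<c} g \<and> g ` {..<c} \<subseteq> {..<C} \<and>
            (\<forall>i<r. \<forall>j<c. A i j = B (f i) (g j)))"

definition pattern_le :: "nat \<Rightarrow> (nat \<Rightarrow> nat) \<Rightarrow> nat \<Rightarrow> (nat \<Rightarrow> nat) \<Rightarrow> bool" where
  "pattern_le m \<tau> n \<sigma> \<longleftrightarrow> submatrix m m (perm_mat \<tau>) n n (perm_mat \<sigma>)"

definition minimal_containing ::
  "nat \<Rightarrow> nat \<Rightarrow> (nat \<Rightarrow> nat \<Rightarrow> bool) \<Rightarrow> nat \<Rightarrow> (nat \<Rightarrow> nat) \<Rightarrow> bool" where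
  "minimal_containing r c A n \<sigma> \<longleftrightarrow>
     \<sigma> permutes {..<n} \<and> submatrix r c A n n (perm_mat \<sigma>) \<and>
     (\<forall>m \<tau>. \<tau> permutes {..<m} \<and> submatrix r c A m m (perm_mat \<tau>) \<and> pattern_le m \<tau> n \<sigma>
        \<longrightarrow> m = n \<and> \<tau> = \<sigma>)"

definition obtained_by_insertion ::
  "nat \<Rightarrow> nat \<Rightarrow> (nat \<Rightarrow> nat \<Rightarrow> bool) \<Rightarrow> nat \<Rightarrow> nat \<Rightarrow> (nat \<Rightarrow> nat \<Rightarrow> bool) \<Rightarrow> bool" where
  "obtained_by_insertion r c A R C B \<longleftrightarrow>
     (\<exists>f g. strict_mono_on {..<r} f \<and> f ` {..<r} \<subseteq> {..<R} \<and>
            strict_mono_on {..<c} g \<and> g ` {..<c} \<subseteq> {..<C} \<and>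
            (\<forall>i<r. \<forall>j<c. A i j = B (f i) (g j)) \<and>
            (\<forall>i<R. i \<notin> f ` {..<r} \<longrightarrow>
               (\<exists>!j. j < C \<and> B i j) \<and>
               (\<forall>j<C. B i j \<longrightarrow> (\<exists>j'<c. j = g j' \<and> (\<forall>i'<r. \<not> A i' j')))) \<and>
            (\<forall>j<C. j \<notin> g ` {..<c} \<longrightarrow>
               (\<exists>!i. i < R \<and> B i j) \<and>
               (\<forall>i<R. B i j \<longrightarrow> (\<exists>i'<r. i = f i' \<and> (\<forall>j'<c. \<not> A i' j')))))"

end

theory Submission
  imports Defs
begin

text \<open>Fix an embedding of M into the permutation matrix of \<sigma>, and call a column of \<sigma>
  covered if it is an embedded column or its 1 lies in an embedded row. Keeping only the
  covered columns and the rows of their 1s gives a pattern of \<sigma> that still contains M, so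
  for minimal \<sigma> every column is covered, which is exactly the insertion condition.
  Conversely, the number of covered columns is r + c minus the number of nonzero columns of M,
  independently of the permutation and the embedding. If \<sigma> is obtained by insertion and
  \<tau> \<le> \<sigma> contains M, composing the embeddings shows that all n columns of \<sigma> are covered
  through columns of \<tau>, so \<tau> has size n and equals \<sigma>.\<close>

lemma sorted_list_of_set_nth_strict_mono_on:
  "strict_mono_on {..<card X} ((!) (sorted_list_of_set (X :: 'a::linorder set)))"
proof (rule strict_mono_onI)
  fix i j assume "i \<in> {..<card X}" "j \<in> {..<card X}" "i < j"
  then show "sorted_list_of_set X ! i < sorted_list_of_set X ! j"
    using sorted_wrt_nth_less[OF strict_sorted_list_of_set] by simp
qed

lemma sorted_list_of_set_nth_image:
  "finite X \<Longrightarrow> (!) (sorted_list_of_set X) ` {..<card X} = X"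
  by (metis atLeast_upt image_set length_sorted_list_of_set map_nth set_sorted_list_of_set)

lemma strict_mono_on_lessThan_self_eq:
  fixes q :: "nat \<Rightarrow> nat"
  assumes mono: "strict_mono_on {..<n} q" and into: "q ` {..<n} \<subseteq> {..<n}" and "j < n"
  shows "q j = j"
proof -
  have lower: "k < n \<Longrightarrow> k \<le> q k" for k
  proof (induction k)
    case (Suc k)
    then show ?case using strict_mono_onD[OF mono, of k "Suc k"] by simp
  qed simp
  have upper: "d < n \<Longrightarrow> q (n - 1 - d) \<le> n - 1 - d" for d
  proof (induction d)
    case 0
    then have "n - 1 \<in> {..<n}" by simp
    then have "q (n - 1) < n" using into by blast
    then show ?case by simp
  next
    case (Suc d)
    then have "q (n - 1 - Suc d) < q (n - 1 - d)" using strict_mono_onD[OF mono] by simp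
    with Suc show ?case by simp
  qed
  show ?thesis using lower[of j] upper[of "n - 1 - j"] \<open>j < n\<close> by simp
qed

lemma perm_mat_row_ex1:
  assumes "\<sigma> permutes {..<n}" "i < n"
  shows "\<exists>!j. j < n \<and> perm_mat \<sigma> i j"
proof (rule ex1I)
  show "inv \<sigma> i < n \<and> perm_mat \<sigma> i (inv \<sigma> i)"
    using assms permutes_inverses(1)[OF assms(1)] permutes_in_image[OF assms(1), of "inv \<sigma> i"]
    by (simp add: perm_mat_def)
  show "j < n \<and> perm_mat \<sigma> i j \<Longrightarrow> j = inv \<sigma> i" for j
    using permutes_inverses(2)[OF assms(1)] by (simp add: perm_mat_def)
qed

lemma strict_mono_on_inv_into_comp:
  fixes p :: "'a::linorder \<Rightarrow> 'b::linorder" and f :: "'c::linorder \<Rightarrow> 'b"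
  assumes p: "strict_mono_on X p" and f: "strict_mono_on Y f" and "f ` Y \<subseteq> p ` X"
  shows "strict_mono_on Y (inv_into X p \<circ> f)"
proof (rule strict_mono_onI)
  fix x y assume xy: "x \<in> Y" "y \<in> Y" "x < y"
  then obtain a b where ab: "a \<in> X" "b \<in> X" "f x = p a" "f y = p b"
    using assms(3) by blast
  have "inv_into X p (p a) = a" "inv_into X p (p b) = b"
    using ab strict_mono_on_imp_inj_on[OF p] by (auto intro: inv_into_f_f)
  moreover have "p a < p b" using strict_mono_onD[OF f xy] ab by simp
  ultimately show "(inv_into X p \<circ> f) x < (inv_into X p \<circ> f) y"
    using strict_mono_on_less[OF p] ab by simp
qed

definition embedding ::
  "nat \<Rightarrow> nat \<Rightarrow> (nat \<Rightarrow> nat \<Rightarrow> bool) \<Rightarrow> nat \<Rightarrow> nat \<Rightarrow> (nat \<Rightarrow> nat \<Rightarrow> bool) \<Rightarrow>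
    (nat \<Rightarrow> nat) \<Rightarrow> (nat \<Rightarrow> nat) \<Rightarrow> bool" where
  "embedding r c A R C B f g \<longleftrightarrow>
     strict_mono_on {..<r} f \<and> f ` {..<r} \<subseteq> {..<R} \<and>
     strict_mono_on {..<c} g \<and> g ` {..<c} \<subseteq> {..<C} \<and>
     (\<forall>i<r. \<forall>j<c. A i j = B (f i) (g j))"

lemma submatrix_iff_embedding:
  "submatrix r c A R C B \<longleftrightarrow> (\<exists>f g. embedding r c A R C B f g)"
  unfolding submatrix_def embedding_def ..

lemma submatrix_dims_le:
  assumes "submatrix r c A R C B"
  shows "r \<le> R" and "c \<le> C"
proof -
  obtain f g where emb: "embedding r c A R C B f g"
    using assms submatrix_iff_embedding by blast
  then have "card (f ` {..<r}) = r" "card (g ` {..<c}) = c"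
    by (auto simp: embedding_def card_image strict_mono_on_imp_inj_on)
  with emb show "r \<le> R" "c \<le> C"
    by (metis card_lessThan card_mono embedding_def finite_lessThan)+
qed

lemma embedding_trans:
  assumes "embedding r c A R C B f g" "embedding R C B R' C' B' p q"
  shows "embedding r c A R' C' B' (p \<circ> f) (q \<circ> g)"
  using assms unfolding embedding_def
  by (auto intro!: strict_mono_onI dest: strict_mono_onD simp: image_subset_iff)

lemma embedding_factor:
  assumes emb: "embedding r c A R C B f g" and emb': "embedding R' C' B' R C B p q"
    and rows: "f ` {..<r} \<subseteq> p ` {..<R'}" and cols: "g ` {..<c} \<subseteq> q ` {..<C'}"
  shows "embedding r c A R' C' B' (inv_into {..<R'} p \<circ> f) (inv_into {..<C'} q \<circ> g)"
proof -
  have inv: "inv_into {..<m} h x < m \<and> h (inv_into {..<m} h x) = x"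
    if "x \<in> h ` {..<m}" for x m and h :: "nat \<Rightarrow> nat"
    using that by (metis f_inv_into_f inv_into_into lessThan_iff)
  have "\<forall>i<r. inv_into {..<R'} p (f i) < R' \<and> p (inv_into {..<R'} p (f i)) = f i"
    using rows inv by blast
  moreover have "\<forall>j<c. inv_into {..<C'} q (g j) < C' \<and> q (inv_into {..<C'} q (g j)) = g j"
    using cols inv by blast
  ultimately show ?thesis
    using emb emb' rows cols unfolding embedding_def
    by (auto intro!: strict_mono_on_inv_into_comp)
qed

section \<open>Columns covered by an embedding into a permutation matrix\<close>

definition covered_columns ::
  "(nat \<Rightarrow> nat) \<Rightarrow> nat \<Rightarrow> nat \<Rightarrow> (nat \<Rightarrow> nat) \<Rightarrow> nat \<Rightarrow> (nat \<Rightarrow> nat) \<Rightarrow> nat set" where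
  "covered_columns \<sigma> n r f c g = {j. j < n \<and> (\<sigma> j \<in> f ` {..<r} \<or> j \<in> g ` {..<c})}"

lemma card_covered_columns:
  assumes perm: "\<sigma> permutes {..<n}" and emb: "embedding r c A n n (perm_mat \<sigma>) f g"
  shows "card (covered_columns \<sigma> n r f c g) + card {j. j < c \<and> (\<exists>i<r. A i j)} = r + c"
proof -
  define Z where "Z = {j. j < c \<and> (\<exists>i<r. A i j)}"
  have f: "strict_mono_on {..<r} f" "f ` {..<r} \<subseteq> {..<n}"
    and g: "strict_mono_on {..<c} g" "g ` {..<c} \<subseteq> {..<n}"
    and A: "\<forall>i<r. \<forall>j<c. A i j = (f i = \<sigma> (g j))"
    using emb by (auto simp: embedding_def perm_mat_def)
  have pre: "\<sigma> -` f ` {..<r} \<subseteq> {..<n}"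
    using f(2) permutes_in_image[OF perm] by auto
  have cover: "covered_columns \<sigma> n r f c g = \<sigma> -` f ` {..<r} \<union> g ` {..<c}"
    using pre g(2) by (auto simp: covered_columns_def)
  have "card (\<sigma> -` f ` {..<r}) = r"
    using card_vimage_inj[OF permutes_inj[OF perm]] permutes_surj[OF perm]
      card_image[OF strict_mono_on_imp_inj_on[OF f(1)]] by simp
  moreover have "card (g ` {..<c}) = c"
    using card_image[OF strict_mono_on_imp_inj_on[OF g(1)]] by simp
  moreover have "\<sigma> -` f ` {..<r} \<inter> g ` {..<c} = g ` Z"
  proof (intro equalityI subsetI)
    fix x assume "x \<in> \<sigma> -` f ` {..<r} \<inter> g ` {..<c}"
    then obtain i j where "i < r" "j < c" "x = g j" "\<sigma> x = f i" by auto
    then have "A i j" using A by simp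
    then show "x \<in> g ` Z" using \<open>i < r\<close> \<open>j < c\<close> \<open>x = g j\<close> by (auto simp: Z_def)
  next
    fix x assume "x \<in> g ` Z"
    then obtain i j where "i < r" "j < c" "x = g j" "f i = \<sigma> x" using A by (auto simp: Z_def)
    then show "x \<in> \<sigma> -` f ` {..<r} \<inter> g ` {..<c}" by (metis IntI image_eqI lessThan_iff vimageI)
  qed
  then have "card (\<sigma> -` f ` {..<r} \<inter> g ` {..<c}) = card Z"
    using inj_on_subset[OF strict_mono_on_imp_inj_on[OF g(1)], of Z]
    by (simp add: Z_def card_image subset_eq)
  moreover have "finite (\<sigma> -` f ` {..<r})" using pre finite_subset by blast
  ultimately show ?thesis
    using card_Un_Int[of "\<sigma> -` f ` {..<r}" "g ` {..<c}"] cover by (simp add: Z_def)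
qed

lemma covered_columns_comp_subset:
  assumes \<sigma>: "\<sigma> permutes {..<n}" and \<tau>: "\<tau> permutes {..<m}"
    and f: "f ` {..<r} \<subseteq> {..<m}" and g: "g ` {..<c} \<subseteq> {..<m}"
    and pq: "embedding m m (perm_mat \<tau>) n n (perm_mat \<sigma>) p q"
  shows "covered_columns \<sigma> n r (p \<circ> f) c (q \<circ> g) \<subseteq> q ` {..<m}"
proof
  fix j assume "j \<in> covered_columns \<sigma> n r (p \<circ> f) c (q \<circ> g)"
  then consider i where "i < r" "\<sigma> j = p (f i)" | "j \<in> q ` g ` {..<c}"
    by (auto simp: covered_columns_def)
  then show "j \<in> q ` {..<m}"
  proof cases
    case 1
    define l where "l = inv \<tau> (f i)"
    have fi: "f i < m" using 1 f by auto
    have \<tau>l: "\<tau> l = f i" using permutes_inverses(1)[OF \<tau>] by (simp add: l_def)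
    then have l: "l < m" using fi permutes_in_image[OF \<tau>, of l] by simp
    moreover have "perm_mat \<tau> (f i) l" using \<tau>l by (simp add: perm_mat_def)
    ultimately have "perm_mat \<sigma> (p (f i)) (q l)"
      using pq fi by (simp add: embedding_def)
    then have "\<sigma> j = \<sigma> (q l)" using 1 by (simp add: perm_mat_def)
    then show ?thesis using l permutes_inj[OF \<sigma>] by (auto dest: injD)
  next
    case 2
    then show ?thesis using g by auto
  qed
qed

lemma permutes_restriction_pattern:
  assumes \<sigma>: "\<sigma> permutes {..<n}" and S: "S \<subseteq> {..<n}"
  obtains \<tau> p q where "\<tau> permutes {..<card S}"
    and "embedding (card S) (card S) (perm_mat \<tau>) n n (perm_mat \<sigma>) p q"
    and "p ` {..<card S} = \<sigma> ` S" and "q ` {..<card S} = S"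
proof -
  define m where "m = card S"
  define q where "q = (!) (sorted_list_of_set S)"
  define p where "p = (!) (sorted_list_of_set (\<sigma> ` S))"
  define \<tau> where "\<tau> j = (if j < m then inv_into {..<m} p (\<sigma> (q j)) else j)" for j
  have fin: "finite S" using S finite_subset by blast
  have inj\<sigma>: "inj_on \<sigma> S" using permutes_inj[OF \<sigma>] inj_on_subset by blast
  have card\<sigma>: "card (\<sigma> ` S) = m" using card_image[OF inj\<sigma>] by (simp add: m_def)
  have q: "strict_mono_on {..<m} q" "q ` {..<m} = S"
    using sorted_list_of_set_nth_strict_mono_on sorted_list_of_set_nth_image[OF fin]
    by (auto simp: q_def m_def)
  have p: "strict_mono_on {..<m} p" "p ` {..<m} = \<sigma> ` S"
    using sorted_list_of_set_nth_strict_mono_on sorted_list_of_set_nth_image[of "\<sigma> ` S"] fin card\<sigma>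
    by (auto simp: p_def)
  have bij_q: "bij_betw q {..<m} S"
    using q by (simp add: bij_betw_def strict_mono_on_imp_inj_on)
  have bij_p: "bij_betw p {..<m} (\<sigma> ` S)"
    using p by (simp add: bij_betw_def strict_mono_on_imp_inj_on)
  have "bij_betw (inv_into {..<m} p \<circ> \<sigma> \<circ> q) {..<m} {..<m}"
    using bij_q inj\<sigma> bij_betw_inv_into[OF bij_p]
    by (auto intro!: bij_betw_trans simp: inj_on_imp_bij_betw)
  then have "bij_betw \<tau> {..<m} {..<m}"
    by (rule bij_betw_cong[THEN iffD1, rotated]) (simp add: \<tau>_def)
  then have perm\<tau>: "\<tau> permutes {..<m}"
    by (rule bij_imp_permutes) (simp add: \<tau>_def)
  have p\<tau>: "p (\<tau> j) = \<sigma> (q j)" if "j < m" for j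
    using that q(2) p(2) by (auto simp: \<tau>_def intro!: f_inv_into_f)
  have "perm_mat \<tau> i j = perm_mat \<sigma> (p i) (q j)" if "i < m" "j < m" for i j
  proof -
    have "\<tau> j < m" using that permutes_in_image[OF perm\<tau>] by simp
    then have "i = \<tau> j \<longleftrightarrow> p i = p (\<tau> j)" using that strict_mono_on_eq[OF p(1)] by simp
    then show ?thesis using p\<tau> that by (simp add: perm_mat_def)
  qed
  then have "embedding m m (perm_mat \<tau>) n n (perm_mat \<sigma>) p q"
    using p q S permutes_in_image[OF \<sigma>] by (auto simp: embedding_def)
  with perm\<tau> p(2) q(2) show ?thesis using that by (simp add: m_def)
qed

lemma pattern_le_same_size_eq:
  assumes \<sigma>: "\<sigma> permutes {..<n}" and \<tau>: "\<tau> permutes {..<n}" and "pattern_le n \<tau> n \<sigma>"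
  shows "\<tau> = \<sigma>"
proof
  obtain p q where pq: "embedding n n (perm_mat \<tau>) n n (perm_mat \<sigma>) p q"
    using assms(3) by (auto simp: pattern_le_def submatrix_iff_embedding)
  then have id: "p j = j" "q j = j" if "j < n" for j
    using that strict_mono_on_lessThan_self_eq by (auto simp: embedding_def)
  fix x show "\<tau> x = \<sigma> x"
  proof (cases "x < n")
    case True
    then have "\<tau> x < n" using permutes_in_image[OF \<tau>] by simp
    then have "perm_mat \<sigma> (p (\<tau> x)) (q x)"
      using pq True by (auto simp: embedding_def perm_mat_def)
    then show ?thesis using id True \<open>\<tau> x < n\<close> by (simp add: perm_mat_def)
  next
    case False
    then show ?thesis using permutes_not_in[OF \<sigma>] permutes_not_in[OF \<tau>] by simp
  qed
qed

lemma covered_columns_imp_inserted_rows: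
  assumes \<sigma>: "\<sigma> permutes {..<n}" and emb: "embedding r c A n n (perm_mat \<sigma>) f g"
    and cov: "covered_columns \<sigma> n r f c g = {..<n}"
    and i: "i < n" "i \<notin> f ` {..<r}"
  shows "(\<exists>!j. j < n \<and> perm_mat \<sigma> i j) \<and>
    (\<forall>j<n. perm_mat \<sigma> i j \<longrightarrow> (\<exists>j'<c. j = g j' \<and> (\<forall>i'<r. \<not> A i' j')))"
proof (intro conjI allI impI perm_mat_row_ex1[OF \<sigma> i(1)])
  fix j assume "j < n" "perm_mat \<sigma> i j"
  then have "j \<in> covered_columns \<sigma> n r f c g" and "\<sigma> j = i"
    using cov by (auto simp: perm_mat_def)
  then obtain j' where j': "j' < c" "j = g j'"
    using i(2) by (auto simp: covered_columns_def)
  have "\<not> A i' j'" if "i' < r" for i'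
  proof
    assume "A i' j'"
    then have "i = f i'" using that j' emb \<open>\<sigma> j = i\<close> by (auto simp: embedding_def perm_mat_def)
    then show False using that i(2) by auto
  qed
  with j' show "\<exists>j'<c. j = g j' \<and> (\<forall>i'<r. \<not> A i' j')" by blast
qed

lemma covered_columns_imp_inserted_columns:
  assumes \<sigma>: "\<sigma> permutes {..<n}" and emb: "embedding r c A n n (perm_mat \<sigma>) f g"
    and cov: "covered_columns \<sigma> n r f c g = {..<n}"
    and j: "j < n" "j \<notin> g ` {..<c}"
  shows "(\<exists>!i. i < n \<and> perm_mat \<sigma> i j) \<and>
    (\<forall>i<n. perm_mat \<sigma> i j \<longrightarrow> (\<exists>i'<r. i = f i' \<and> (\<forall>j'<c. \<not> A i' j')))"
proof (intro conjI allI impI)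
  show "\<exists>!i. i < n \<and> perm_mat \<sigma> i j"
    using j(1) permutes_in_image[OF \<sigma>] by (auto simp: perm_mat_def)
  fix i assume "perm_mat \<sigma> i j"
  then have "i = \<sigma> j" by (simp add: perm_mat_def)
  obtain i' where i': "i' < r" "\<sigma> j = f i'"
    using cov j by (auto simp: covered_columns_def)
  have "\<not> A i' j'" if "j' < c" for j'
  proof
    assume "A i' j'"
    then have "\<sigma> j = \<sigma> (g j')" using that i' emb by (auto simp: embedding_def perm_mat_def)
    then show False using that j(2) permutes_inj[OF \<sigma>] by (auto dest: injD)
  qed
  with i' \<open>i = \<sigma> j\<close> show "\<exists>i'<r. i = f i' \<and> (\<forall>j'<c. \<not> A i' j')" by blast
qed

lemma obtained_by_insertion_iff_covered_columns:
  assumes \<sigma>: "\<sigma> permutes {..<n}"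
  shows "obtained_by_insertion r c A n n (perm_mat \<sigma>) \<longleftrightarrow>
    (\<exists>f g. embedding r c A n n (perm_mat \<sigma>) f g \<and> covered_columns \<sigma> n r f c g = {..<n})"
proof
  assume "obtained_by_insertion r c A n n (perm_mat \<sigma>)"
  then obtain f g where emb: "embedding r c A n n (perm_mat \<sigma>) f g"
    and cols: "\<forall>j<n. j \<notin> g ` {..<c} \<longrightarrow>
      (\<exists>!i. i < n \<and> perm_mat \<sigma> i j) \<and>
      (\<forall>i<n. perm_mat \<sigma> i j \<longrightarrow> (\<exists>i'<r. i = f i' \<and> (\<forall>j'<c. \<not> A i' j')))"
    unfolding obtained_by_insertion_def
    by (elim exE conjE) (rule that; (unfold embedding_def)?; (intro conjI)?; assumption)
  have "j \<in> covered_columns \<sigma> n r f c g" if j: "j < n" for j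
  proof (cases "j \<in> g ` {..<c}")
    case False
    moreover have "\<sigma> j < n" using j permutes_in_image[OF \<sigma>] by simp
    ultimately obtain i' where "i' < r" "\<sigma> j = f i'"
      using j cols by (auto simp: perm_mat_def)
    then show ?thesis using j by (auto simp: covered_columns_def)
  qed (use j in \<open>auto simp: covered_columns_def\<close>)
  then have "covered_columns \<sigma> n r f c g = {..<n}"
    by (auto simp: covered_columns_def)
  with emb show "\<exists>f g. embedding r c A n n (perm_mat \<sigma>) f g \<and> covered_columns \<sigma> n r f c g = {..<n}"
    by blast
next
  assume "\<exists>f g. embedding r c A n n (perm_mat \<sigma>) f g \<and> covered_columns \<sigma> n r f c g = {..<n}"
  then obtain f g where emb: "embedding r c A n n (perm_mat \<sigma>) f g"
    and cov: "covered_columns \<sigma> n r f c g = {..<n}" by blast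
  have rows: "\<forall>i<n. i \<notin> f ` {..<r} \<longrightarrow>
      (\<exists>!j. j < n \<and> perm_mat \<sigma> i j) \<and>
      (\<forall>j<n. perm_mat \<sigma> i j \<longrightarrow> (\<exists>j'<c. j = g j' \<and> (\<forall>i'<r. \<not> A i' j')))"
    using covered_columns_imp_inserted_rows[OF \<sigma> emb cov] by blast
  have cols: "\<forall>j<n. j \<notin> g ` {..<c} \<longrightarrow>
      (\<exists>!i. i < n \<and> perm_mat \<sigma> i j) \<and>
      (\<forall>i<n. perm_mat \<sigma> i j \<longrightarrow> (\<exists>i'<r. i = f i' \<and> (\<forall>j'<c. \<not> A i' j')))"
    using covered_columns_imp_inserted_columns[OF \<sigma> emb cov] by blast
  show "obtained_by_insertion r c A n n (perm_mat \<sigma>)"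
    unfolding obtained_by_insertion_def
    using emb[unfolded embedding_def] rows cols by (intro exI[of _ f] exI[of _ g]) (elim conjE; intro conjI)
qed

section \<open>Minimal permutations containing a matrix\<close>

lemma minimal_containing_imp_obtained_by_insertion:
  assumes min: "minimal_containing r c A n \<sigma>"
  shows "obtained_by_insertion r c A n n (perm_mat \<sigma>)"
proof -
  have \<sigma>: "\<sigma> permutes {..<n}" and "submatrix r c A n n (perm_mat \<sigma>)"
    using min by (auto simp: minimal_containing_def)
  then obtain f g where emb: "embedding r c A n n (perm_mat \<sigma>) f g"
    by (auto simp: submatrix_iff_embedding)
  define S where "S = covered_columns \<sigma> n r f c g"
  have S: "S \<subseteq> {..<n}" by (auto simp: S_def covered_columns_def)
  obtain \<tau> p q where \<tau>: "\<tau> permutes {..<card S}"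
    and pq: "embedding (card S) (card S) (perm_mat \<tau>) n n (perm_mat \<sigma>) p q"
    and p: "p ` {..<card S} = \<sigma> ` S" and q: "q ` {..<card S} = S"
    using permutes_restriction_pattern[OF \<sigma> S] by blast
  have "f ` {..<r} \<subseteq> \<sigma> ` S"
  proof
    fix x assume x: "x \<in> f ` {..<r}"
    then have "x < n" using emb by (auto simp: embedding_def)
    then have "inv \<sigma> x \<in> S"
      using x permutes_inverses(1)[OF \<sigma>] permutes_in_image[OF \<sigma>, of "inv \<sigma> x"]
      by (auto simp: S_def covered_columns_def)
    then show "x \<in> \<sigma> ` S" using permutes_inverses(1)[OF \<sigma>] by (metis image_eqI)
  qed
  moreover have "g ` {..<c} \<subseteq> S"
    using emb by (auto simp: S_def covered_columns_def embedding_def)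
  ultimately have "submatrix r c A (card S) (card S) (perm_mat \<tau>)"
    using embedding_factor[OF emb pq] p q by (auto simp: submatrix_iff_embedding)
  moreover have "pattern_le (card S) \<tau> n \<sigma>"
    using pq by (auto simp: pattern_le_def submatrix_iff_embedding)
  ultimately have "card S = n" using min \<tau> by (auto simp: minimal_containing_def)
  then have "S = {..<n}" using S by (simp add: card_subset_eq)
  with emb show ?thesis
    using obtained_by_insertion_iff_covered_columns[OF \<sigma>] by (auto simp: S_def)
qed

lemma obtained_by_insertion_imp_minimal_containing:
  assumes \<sigma>: "\<sigma> permutes {..<n}" and ob: "obtained_by_insertion r c A n n (perm_mat \<sigma>)"
  shows "minimal_containing r c A n \<sigma>"
proof -
  define z where "z = card {j. j < c \<and> (\<exists>i<r. A i j)}"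
  obtain f g where emb: "embedding r c A n n (perm_mat \<sigma>) f g"
    and "covered_columns \<sigma> n r f c g = {..<n}"
    using ob obtained_by_insertion_iff_covered_columns[OF \<sigma>] by blast
  then have size: "n + z = r + c"
    using card_covered_columns[OF \<sigma> emb] by (simp add: z_def)
  have "m = n \<and> \<tau> = \<sigma>"
    if \<tau>: "\<tau> permutes {..<m}" and sub: "submatrix r c A m m (perm_mat \<tau>)"
      and le: "pattern_le m \<tau> n \<sigma>" for m \<tau>
  proof -
    obtain f' g' where emb': "embedding r c A m m (perm_mat \<tau>) f' g'"
      using sub by (auto simp: submatrix_iff_embedding)
    obtain p q where pq: "embedding m m (perm_mat \<tau>) n n (perm_mat \<sigma>) p q"
      using le by (auto simp: pattern_le_def submatrix_iff_embedding)
    have "card (covered_columns \<sigma> n r (p \<circ> f') c (q \<circ> g')) = n"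
      using card_covered_columns[OF \<sigma> embedding_trans[OF emb' pq]] size by (simp add: z_def)
    moreover have "covered_columns \<sigma> n r (p \<circ> f') c (q \<circ> g') \<subseteq> q ` {..<m}"
      using covered_columns_comp_subset[OF \<sigma> \<tau> _ _ pq] emb' by (auto simp: embedding_def)
    ultimately have "n \<le> m"
      by (metis card_image_le card_lessThan card_mono finite_imageI finite_lessThan le_trans)
    moreover have "m \<le> n" using le submatrix_dims_le by (auto simp: pattern_le_def)
    ultimately have "m = n" by simp
    then show ?thesis using pattern_le_same_size_eq[OF \<sigma>] \<tau> le by simp
  qed
  moreover have "submatrix r c A n n (perm_mat \<sigma>)"
    using emb by (auto simp: submatrix_iff_embedding)
  ultimately show ?thesis using \<sigma> by (auto simp: minimal_containing_def)
qed

theorem proposition9: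
  fixes r c :: nat and A :: "nat \<Rightarrow> nat \<Rightarrow> bool"
  assumes "quasi_perm r c A"
  shows "\<forall>n \<sigma>. \<sigma> permutes {..<n} \<longrightarrow>
           (minimal_containing r c A n \<sigma> \<longleftrightarrow>
            obtained_by_insertion r c A n n (perm_mat \<sigma>))"
  using minimal_containing_imp_obtained_by_insertion obtained_by_insertion_imp_minimal_containing
  by blast

end
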